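(* For real $\alpha\ne3$ let $$\Phi_\alpha(X)=\frac{1}{3-\alpha}\big(\sigma_1X\sigma_1+\sigma_2X\sigma_2+\sigma_3X\sigma_3-\alpha X\big),\qquad X\in M_2(\mathbb{C}).$$ Then $\Phi_\alpha$ is positive if and only if $\alpha\le1$; it is a Schwarz map if and only if $\alpha\le\frac13$; and it is completely positive if and only if $\alpha\le0$.
   Context: $\sigma_1,\sigma_2,\sigma_3$ are the Pauli matrices; $\Phi_\alpha$ is unital. A unital linear map $\Phi$ is a Schwarz map if $\Phi(X^\dagger X)\ge\Phi(X^\dagger)\Phi(X)$ (in the positive semidefinite order) for all $X\in M_2(\mathbb{C})$. *)

theory Defs
  imports "Jordan_Normal_Form.Schur_Decomposition"
begin

definition psd :: "complex mat \<Rightarrow> bool" where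
  "psd A \<longleftrightarrow> square_mat A \<and> mat_adjoint A = A \<and>
     (\<forall>v \<in> carrier_vec (dim_row A). 0 \<le> Re (scalar_prod (conjugate v) (A *\<^sub>v v)))"

definition sigma1 :: "complex mat" where
  "sigma1 = mat_of_rows_list 2 [[0, 1], [1, 0]]"
definition sigma2 :: "complex mat" where
  "sigma2 = mat_of_rows_list 2 [[0, -\<i>], [\<i>, 0]]"
definition sigma3 :: "complex mat" where
  "sigma3 = mat_of_rows_list 2 [[1, 0], [0, -1]]"

definition Phi :: "real \<Rightarrow> complex mat \<Rightarrow> complex mat" where
  "Phi \<alpha> X = complex_of_real (1 / (3 - \<alpha>)) \<cdot>\<^sub>m
     (sigma1 * X * sigma1 + sigma2 * X * sigma2 + sigma3 * X * sigma3
      - complex_of_real \<alpha> \<cdot>\<^sub>m X)"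

text \<open>Maps on M_2(C); only their values on 2x2 matrices matter.\<close>
definition positive_map :: "(complex mat \<Rightarrow> complex mat) \<Rightarrow> bool" where
  "positive_map \<Phi> \<longleftrightarrow> (\<forall>X \<in> carrier_mat 2 2. psd X \<longrightarrow> psd (\<Phi> X))"

definition schwarz_map :: "(complex mat \<Rightarrow> complex mat) \<Rightarrow> bool" where
  "schwarz_map \<Phi> \<longleftrightarrow> (\<forall>X \<in> carrier_mat 2 2.
     psd (\<Phi> (mat_adjoint X * X) - \<Phi> (mat_adjoint X) * \<Phi> X))"

text \<open>Ampliation id_n \<otimes> \<Phi>: a (2n)x(2n) matrix is viewed as an n x n block matrix with
  2x2 blocks, and \<Phi> is applied to every block.\<close>
definition ampliation :: "nat \<Rightarrow> (complex mat \<Rightarrow> complex mat) \<Rightarrow> complex mat \<Rightarrow> complex mat" where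
  "ampliation n \<Phi> X = mat (2*n) (2*n) (\<lambda>(i, j).
     \<Phi> (mat 2 2 (\<lambda>(a, b). X $$ (2 * (i div 2) + a, 2 * (j div 2) + b))) $$ (i mod 2, j mod 2))"

definition completely_positive :: "(complex mat \<Rightarrow> complex mat) \<Rightarrow> bool" where
  "completely_positive \<Phi> \<longleftrightarrow>
     (\<forall>n. \<forall>X \<in> carrier_mat (2*n) (2*n). psd X \<longrightarrow> psd (ampliation n \<Phi> X))"

end

theory Submission
  imports Defs
begin

text \<open>With \<open>a = 2/(3 - \<alpha>)\<close> the map is \<open>\<Phi>(X) = (1 - 2a) X + a tr(X) I\<close>.
  Since \<open>tr(X) I - X\<close> is the adjugate of \<open>X\<close>, \<open>\<Phi> = (1 - a) id + a adj\<close>, which is positive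
  exactly for \<open>0 \<le> a \<le> 1\<close>. Using \<open>\<sigma>\<^sub>1X\<sigma>\<^sub>1 + \<sigma>\<^sub>2X\<sigma>\<^sub>2 + \<sigma>\<^sub>3X\<sigma>\<^sub>3 = 2 tr(X) I - X\<close> backwards,
  \<open>\<Phi>\<close> is the Kraus sum \<open>(1 - 3a/2) X + (a/2) \<Sum>\<^sub>k \<sigma>\<^sub>kX\<sigma>\<^sub>k\<close>, completely positive for \<open>0 \<le> a \<le> 2/3\<close>.
  The Schwarz defect \<open>\<Phi>(X\<^sup>*X) - \<Phi>(X)\<^sup>*\<Phi>(X)\<close> has quadratic form
  \<open>(a/4) |C w'|\<^sup>2 + (a (3 - 4a)/4) |C w|\<^sup>2\<close> with \<open>C = 2X - tr(X) I\<close> and \<open>w' = (cnj q, -cnj p)\<close> for \<open>w = (p, q)\<close>,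
  nonnegative for \<open>0 \<le> a \<le> 3/4\<close>. Each bound is sharp on a single test matrix
  (\<open>E\<^sub>1\<^sub>1\<close>, \<open>E\<^sub>1\<^sub>2\<close> and the maximally entangled state respectively), and the three ranges of \<open>a\<close> translate into
  \<open>\<alpha> \<le> 1\<close>, \<open>\<alpha> \<le> 1/3\<close> and \<open>\<alpha> \<le> 0\<close>.\<close>

abbreviation quad_form :: "complex mat \<Rightarrow> complex vec \<Rightarrow> complex" where
  "quad_form A v \<equiv> scalar_prod (conjugate v) (A *\<^sub>v v)"

lemma sum_lessThan_2: "(\<Sum>i::nat<2. f i) = f 0 + (f 1 :: 'a::comm_monoid_add)"
  by (simp add: numeral_2_eq_2)

lemma sum_lessThan_double: "(\<Sum>i<2*(n::nat). f i) = (\<Sum>p<n. f (2*p) + (f (2*p+1) :: 'a::comm_monoid_add))"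
  by (induct n) (simp_all add: algebra_simps)

lemma Re_cnj_mult_self_nonneg: "0 \<le> Re (cnj z * z)"
  by (simp add: mult.commute flip: complex_norm_square)

lemma quad_form_expand:
  assumes "A \<in> carrier_mat m m" "v \<in> carrier_vec m"
  shows "quad_form A v = (\<Sum>i<m. cnj (v$i) * (\<Sum>j<m. A$$(i,j) * v$j))"
proof -
  have "(A *\<^sub>v v)$i = (\<Sum>j<m. A$$(i,j) * v$j)" if "i < m" for i
    using assms that by (auto simp: scalar_prod_def atLeast0LessThan intro!: sum.cong)
  then show ?thesis
    using assms by (auto simp: scalar_prod_def atLeast0LessThan intro!: sum.cong)
qed

lemma mat_adjoint_index:
  assumes "A \<in> carrier_mat m m" "i < m" "j < m"
  shows "mat_adjoint A $$ (i,j) = cnj (A$$(j,i))"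
  using assms by (simp add: mat_adjoint_def mat_of_rows_def)

section \<open>Two by two matrices\<close>

definition mat2 :: "complex \<Rightarrow> complex \<Rightarrow> complex \<Rightarrow> complex \<Rightarrow> complex mat" where
  "mat2 a b c d = mat 2 2 (\<lambda>(i,j). if i = 0 then (if j = 0 then a else b) else (if j = 0 then c else d))"

lemma mat2_carrier [simp]:
  "mat2 a b c d \<in> carrier_mat 2 2" "dim_row (mat2 a b c d) = 2" "dim_col (mat2 a b c d) = 2"
  by (auto simp: mat2_def)

lemma mat2_index [simp]:
  "mat2 a b c d $$ (0,0) = a" "mat2 a b c d $$ (0,1) = b"
  "mat2 a b c d $$ (1,0) = c" "mat2 a b c d $$ (1,1) = d"
  "mat2 a b c d $$ (0,Suc 0) = b" "mat2 a b c d $$ (Suc 0,0) = c" "mat2 a b c d $$ (Suc 0,Suc 0) = d"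
  by (auto simp: mat2_def)

lemma less_2_cases: "(i::nat) < 2 \<longleftrightarrow> i = 0 \<or> i = 1"
  by auto

lemma mat2_eta: "X \<in> carrier_mat 2 2 \<Longrightarrow> X = mat2 (X$$(0,0)) (X$$(0,1)) (X$$(1,0)) (X$$(1,1))"
  by (rule eq_matI) (auto simp: mat2_def less_2_cases)

lemma mat2_eq_iff: "mat2 a b c d = mat2 a' b' c' d' \<longleftrightarrow> a = a' \<and> b = b' \<and> c = c' \<and> d = d'"
  by (metis mat2_index(1-4))

lemma mat2_mult: "mat2 a b c d * mat2 e f g h = mat2 (a*e+b*g) (a*f+b*h) (c*e+d*g) (c*f+d*h)"
  by (rule eq_matI) (auto simp: mat2_def less_2_cases scalar_prod_def sum_lessThan_2 atLeast0LessThan)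

lemma mat2_add: "mat2 a b c d + mat2 e f g h = mat2 (a+e) (b+f) (c+g) (d+h)"
  by (rule eq_matI) (auto simp: mat2_def less_2_cases)

lemma mat2_diff: "mat2 a b c d - mat2 e f g h = mat2 (a-e) (b-f) (c-g) (d-h)"
  by (rule eq_matI) (auto simp: mat2_def less_2_cases)

lemma smult_mat2: "k \<cdot>\<^sub>m mat2 a b c d = mat2 (k*a) (k*b) (k*c) (k*d)"
  by (rule eq_matI) (auto simp: mat2_def less_2_cases)

lemma mat_adjoint_mat2: "mat_adjoint (mat2 a b c d) = mat2 (cnj a) (cnj c) (cnj b) (cnj d)"
  by (rule eq_matI) (auto simp: mat2_def less_2_cases mat_adjoint_def mat_of_rows_def)

lemma pauli_mat2: "sigma1 = mat2 0 1 1 0" "sigma2 = mat2 0 (-\<i>) \<i> 0" "sigma3 = mat2 1 0 0 (-1)"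
  by (rule eq_matI; auto simp: mat2_def less_2_cases sigma1_def sigma2_def sigma3_def mat_of_rows_list_def)+

definition form2 :: "complex \<Rightarrow> complex \<Rightarrow> complex \<Rightarrow> complex \<Rightarrow> complex \<Rightarrow> complex \<Rightarrow> complex" where
  "form2 a b c d x y = cnj x * (a*x + b*y) + cnj y * (c*x + d*y)"

lemma quad_form_mat2:
  "v \<in> carrier_vec 2 \<Longrightarrow> quad_form (mat2 a b c d) v = form2 a b c d (v$0) (v$1)"
  by (simp only: quad_form_expand[OF mat2_carrier(1)] sum_lessThan_2 mat2_index form2_def)

lemma psd_mat2_iff:
  "psd (mat2 a b c d) \<longleftrightarrow> cnj a = a \<and> cnj d = d \<and> c = cnj b \<and> (\<forall>x y. 0 \<le> Re (form2 a b c d x y))"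
proof -
  have "mat_adjoint (mat2 a b c d) = mat2 a b c d \<longleftrightarrow> cnj a = a \<and> cnj d = d \<and> c = cnj b"
    unfolding mat_adjoint_mat2 mat2_eq_iff by (metis complex_cnj_cnj)
  moreover have "(\<forall>v \<in> carrier_vec 2. 0 \<le> Re (quad_form (mat2 a b c d) v))
      \<longleftrightarrow> (\<forall>x y. 0 \<le> Re (form2 a b c d x y))"
  proof
    assume "\<forall>v \<in> carrier_vec 2. 0 \<le> Re (quad_form (mat2 a b c d) v)"
    from this[rule_format, of "vec 2 (\<lambda>i. if i = 0 then x else y)" for x y]
    show "\<forall>x y. 0 \<le> Re (form2 a b c d x y)"
      by (simp add: quad_form_mat2)
  qed (simp add: quad_form_mat2)
  ultimately show ?thesis
    unfolding psd_def by (simp add: square_mat.simps)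
qed

definition phi :: "real \<Rightarrow> complex \<Rightarrow> complex \<Rightarrow> complex \<Rightarrow> complex \<Rightarrow> complex mat" where
  "phi a x y z w = mat2 ((1 - of_real a)*x + of_real a*w) ((1 - 2*of_real a)*y)
                        ((1 - 2*of_real a)*z) (of_real a*x + (1 - of_real a)*w)"

lemma pauli_twirl_mat2:
  "sigma1 * mat2 x y z w * sigma1 + sigma2 * mat2 x y z w * sigma2 + sigma3 * mat2 x y z w * sigma3
   = mat2 (x + 2*w) (- y) (- z) (w + 2*x)"
  unfolding pauli_mat2 mat2_mult mat2_add mat2_eq_iff by (simp add: algebra_simps)

lemma Phi_mat2:
  assumes "\<alpha> \<noteq> 3"
  shows "Phi \<alpha> (mat2 x y z w) = phi (2/(3-\<alpha>)) x y z w"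
proof -
  define k where "k = complex_of_real (1/(3-\<alpha>))"
  have "1/(3-\<alpha>) * \<alpha> = 3 * (1/(3-\<alpha>)) - 1"
    using assms by (simp add: field_simps)
  then have k\<alpha>: "k * of_real \<alpha> = 3*k - 1"
    unfolding k_def by (metis of_real_mult of_real_diff of_real_1 of_real_numeral)
  have diagonal: "k * (u + 2*v - of_real \<alpha> * u) = (1 - 2*k)*u + 2*k*v" for u v
  proof -
    have "k * (u + 2*v - of_real \<alpha> * u) = k*u + 2*k*v - (k * of_real \<alpha>) * u"
      by (simp add: algebra_simps)
    then show ?thesis
      unfolding k\<alpha> by (simp add: algebra_simps)
  qed
  have off_diagonal: "k * (- u - of_real \<alpha> * u) = (1 - 4*k)*u" for u
  proof -
    have "k * (- u - of_real \<alpha> * u) = - k*u - (k * of_real \<alpha>) * u"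
      by (simp add: algebra_simps)
    then show ?thesis
      unfolding k\<alpha> by (simp add: algebra_simps)
  qed
  have "complex_of_real (2/(3-\<alpha>)) = 2*k"
    unfolding k_def by (metis times_divide_eq_right mult_1_right of_real_mult of_real_numeral)
  then show ?thesis
    unfolding Phi_def phi_def pauli_twirl_mat2 smult_mat2 mat2_diff k_def[symmetric] diagonal off_diagonal
    by (simp add: algebra_simps)
qed

section \<open>Positivity\<close>

text \<open>The first summand is the form of the adjugate \<open>tr(X) I - X\<close>, evaluated through the
  rotation \<open>(p, q) \<mapsto> (cnj q, -cnj p)\<close>.\<close>
lemma form2_phi:
  "form2 ((1 - of_real a)*x + of_real a*w) ((1 - 2*of_real a)*y) ((1 - 2*of_real a)*z)
      (of_real a*x + (1 - of_real a)*w) p q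
   = of_real a * form2 x y z w (cnj q) (- cnj p) + (1 - of_real a) * form2 x y z w p q"
  unfolding form2_def by (simp add: algebra_simps)

lemma psd_phi:
  assumes "0 \<le> a" "a \<le> 1" "psd (mat2 x y z w)"
  shows "psd (phi a x y z w)"
proof -
  from assms(3) have herm: "cnj x = x" "cnj w = w" "z = cnj y"
    and pos: "\<And>p q. 0 \<le> Re (form2 x y z w p q)"
    unfolding psd_mat2_iff by auto
  have "0 \<le> a * Re (form2 x y z w (cnj q) (- cnj p)) + (1 - a) * Re (form2 x y z w p q)" for p q
    using assms(1,2) pos by simp
  then show ?thesis
    unfolding phi_def psd_mat2_iff form2_phi using herm by simp
qed

lemma psd_phi_E11_imp:
  assumes "psd (phi a 1 0 0 0)"
  shows "0 \<le> a \<and> a \<le> 1"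
proof -
  have "0 \<le> Re (form2 (1 - of_real a) 0 0 (of_real a) p q)" for p q
    using assms unfolding phi_def psd_mat2_iff by simp
  from this[of 1 0] this[of 0 1] show ?thesis
    by (simp add: form2_def)
qed

section \<open>The Schwarz inequality\<close>

definition schwarz_defect :: "real \<Rightarrow> complex \<Rightarrow> complex \<Rightarrow> complex \<Rightarrow> complex \<Rightarrow> complex mat" where
  "schwarz_defect a x y z w =
     (let M = mat_adjoint (mat2 x y z w) * mat2 x y z w
      in phi a (M$$(0,0)) (M$$(0,1)) (M$$(1,0)) (M$$(1,1)) - phi a (cnj x) (cnj z) (cnj y) (cnj w) * phi a x y z w)"

text \<open>\<open>|C (p, q)|\<^sup>2\<close> for the matrix \<open>C = 2X - tr(X) I\<close>.\<close>
definition traceless_form :: "complex \<Rightarrow> complex \<Rightarrow> complex \<Rightarrow> complex \<Rightarrow> complex \<Rightarrow> complex \<Rightarrow> complex" where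
  "traceless_form x y z w p q =
     cnj ((x-w)*p + 2*y*q) * ((x-w)*p + 2*y*q) + cnj (2*z*p - (x-w)*q) * (2*z*p - (x-w)*q)"

lemma Re_traceless_form_nonneg: "0 \<le> Re (traceless_form x y z w p q)"
  unfolding traceless_form_def plus_complex.sel by (intro add_nonneg_nonneg Re_cnj_mult_self_nonneg)

lemma schwarz_defect_eq_mat2:
  fixes a :: real and x y z w p q :: complex
  defines "D \<equiv> schwarz_defect a x y z w"
  shows "D = mat2 (D$$(0,0)) (D$$(0,1)) (D$$(1,0)) (D$$(1,1))"
    and "cnj (D$$(0,0)) = D$$(0,0)" "cnj (D$$(1,1)) = D$$(1,1)" "D$$(1,0) = cnj (D$$(0,1))"
    and "4 * form2 (D$$(0,0)) (D$$(0,1)) (D$$(1,0)) (D$$(1,1)) p q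
         = of_real a * traceless_form x y z w (cnj q) (- cnj p) + of_real (a * (3 - 4*a)) * traceless_form x y z w p q"
  unfolding D_def schwarz_defect_def Let_def mat_adjoint_mat2 mat2_mult phi_def mat2_diff mat2_index
    form2_def traceless_form_def
  by (simp_all add: algebra_simps)

lemma psd_schwarz_defect_iff:
  "psd (schwarz_defect a x y z w) \<longleftrightarrow>
   (\<forall>p q. 0 \<le> a * Re (traceless_form x y z w (cnj q) (- cnj p)) + a * (3 - 4*a) * Re (traceless_form x y z w p q))"
proof -
  have "0 \<le> Re (form2 (schwarz_defect a x y z w $$ (0,0)) (schwarz_defect a x y z w $$ (0,1))
      (schwarz_defect a x y z w $$ (1,0)) (schwarz_defect a x y z w $$ (1,1)) p q)
    \<longleftrightarrow> 0 \<le> a * Re (traceless_form x y z w (cnj q) (- cnj p)) + a * (3 - 4*a) * Re (traceless_form x y z w p q)"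
    for p q
    using arg_cong[OF schwarz_defect_eq_mat2(5)[of a x y z w p q], of Re] by simp arith
  then show ?thesis
    using schwarz_defect_eq_mat2(2-4)[of a x y z w]
    by (subst schwarz_defect_eq_mat2(1)) (simp only: psd_mat2_iff simp_thms)
qed

lemma psd_schwarz_defect:
  assumes "0 \<le> a" "a \<le> 3/4"
  shows "psd (schwarz_defect a x y z w)"
  unfolding psd_schwarz_defect_iff
  using assms Re_traceless_form_nonneg by (intro allI add_nonneg_nonneg mult_nonneg_nonneg) auto

lemma psd_schwarz_defect_E12_imp:
  assumes "psd (schwarz_defect a 0 1 0 0)"
  shows "0 \<le> a \<and> a \<le> 3/4"
proof -
  have "0 \<le> a" and "0 \<le> a * (3 - 4*a)"
    using assms[unfolded psd_schwarz_defect_iff, rule_format, of 0 1]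
      assms[unfolded psd_schwarz_defect_iff, rule_format, of 1 0]
    by (simp_all add: traceless_form_def)
  then show ?thesis
    by (cases "a = 0") (auto simp: zero_le_mult_iff)
qed

section \<open>Complete positivity\<close>

definition block_form :: "complex mat \<Rightarrow> complex vec \<Rightarrow> nat \<Rightarrow> nat \<Rightarrow> complex" where
  "block_form A v p q =
     cnj (v$(2*p)) * (A$$(2*p,2*q) * v$(2*q) + A$$(2*p,2*q+1) * v$(2*q+1))
   + cnj (v$(2*p+1)) * (A$$(2*p+1,2*q) * v$(2*q) + A$$(2*p+1,2*q+1) * v$(2*q+1))"

lemma quad_form_blocks:
  assumes "A \<in> carrier_mat (2*n) (2*n)" "v \<in> carrier_vec (2*n)"
  shows "quad_form A v = (\<Sum>p<n. \<Sum>q<n. block_form A v p q)"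
  unfolding quad_form_expand[OF assms] sum_lessThan_double block_form_def
  by (simp add: sum_distrib_left sum.distrib algebra_simps)

definition phi_ampliation :: "real \<Rightarrow> nat \<Rightarrow> complex mat \<Rightarrow> complex mat" where
  "phi_ampliation a n X = mat (2*n) (2*n) (\<lambda>(i,j).
     phi a (X$$(2*(i div 2), 2*(j div 2))) (X$$(2*(i div 2), 2*(j div 2)+1))
           (X$$(2*(i div 2)+1, 2*(j div 2))) (X$$(2*(i div 2)+1, 2*(j div 2)+1)) $$ (i mod 2, j mod 2))"

lemma ampliation_Phi:
  assumes "\<alpha> \<noteq> 3"
  shows "ampliation n (Phi \<alpha>) X = phi_ampliation (2/(3-\<alpha>)) n X"
proof (rule eq_matI)
  fix i j
  let ?B = "mat 2 2 (\<lambda>(c, d). X $$ (2 * (i div 2) + c, 2 * (j div 2) + d))"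
  have "?B = mat2 (X$$(2*(i div 2), 2*(j div 2))) (X$$(2*(i div 2), 2*(j div 2)+1))
     (X$$(2*(i div 2)+1, 2*(j div 2))) (X$$(2*(i div 2)+1, 2*(j div 2)+1))"
    by (subst mat2_eta[of ?B]) auto
  moreover assume "i < dim_row (phi_ampliation (2/(3-\<alpha>)) n X)" "j < dim_col (phi_ampliation (2/(3-\<alpha>)) n X)"
  ultimately show "ampliation n (Phi \<alpha>) X $$ (i, j) = phi_ampliation (2/(3-\<alpha>)) n X $$ (i, j)"
    unfolding ampliation_def phi_ampliation_def by (simp add: Phi_mat2[OF assms])
qed (auto simp: ampliation_def phi_ampliation_def)

lemma phi_ampliation_carrier [simp]:
  "phi_ampliation a n X \<in> carrier_mat (2*n) (2*n)"
  "dim_row (phi_ampliation a n X) = 2*n" "dim_col (phi_ampliation a n X) = 2*n"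
  by (simp_all add: phi_ampliation_def)

lemma phi_ampliation_index:
  assumes "p < n" "q < n"
  shows "phi_ampliation a n X $$ (2*p, 2*q) = (1 - of_real a) * X$$(2*p,2*q) + of_real a * X$$(2*p+1,2*q+1)"
    "phi_ampliation a n X $$ (2*p, 2*q+1) = (1 - 2*of_real a) * X$$(2*p,2*q+1)"
    "phi_ampliation a n X $$ (2*p+1, 2*q) = (1 - 2*of_real a) * X$$(2*p+1,2*q)"
    "phi_ampliation a n X $$ (2*p+1, 2*q+1) = of_real a * X$$(2*p,2*q) + (1 - of_real a) * X$$(2*p+1,2*q+1)"
  using assms by (simp_all add: phi_ampliation_def phi_def)

lemma hermitian_phi_ampliation:
  assumes X: "X \<in> carrier_mat (2*n) (2*n)" and herm: "mat_adjoint X = X"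
  shows "mat_adjoint (phi_ampliation a n X) = phi_ampliation a n X"
proof (rule eq_matI)
  have X_herm: "X$$(k,l) = cnj (X$$(l,k))" if "k < 2*n" "l < 2*n" for k l
    using mat_adjoint_index[OF X that] herm by simp
  fix i j assume "i < dim_row (phi_ampliation a n X)" "j < dim_col (phi_ampliation a n X)"
  then have ij: "i < 2*n" "j < 2*n" by auto
  define p q where "p = i div 2" and "q = j div 2"
  have pq: "p < n" "q < n"
    using ij by (auto simp: p_def q_def)
  then have b: "2*p < 2*n" "2*p+1 < 2*n" "2*q < 2*n" "2*q+1 < 2*n"
    by auto
  have "i = 2*p \<or> i = 2*p+1" "j = 2*q \<or> j = 2*q+1"
    unfolding p_def q_def by presburger+
  then have "cnj (phi_ampliation a n X $$ (j, i)) = phi_ampliation a n X $$ (i, j)"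
    by (elim disjE; simp only: phi_ampliation_index[OF pq] phi_ampliation_index[OF pq(2,1)]
        X_herm[OF b(1) b(3)] X_herm[OF b(1) b(4)] X_herm[OF b(2) b(3)] X_herm[OF b(2) b(4)]; simp)
  then show "mat_adjoint (phi_ampliation a n X) $$ (i, j) = phi_ampliation a n X $$ (i, j)"
    using mat_adjoint_index[OF phi_ampliation_carrier(1) ij] by simp
qed (auto simp: mat_adjoint_def)

text \<open>The ampliations \<open>id\<^sub>n \<otimes> \<sigma>\<^sub>k\<close> of the Pauli matrices, acting on \<open>\<complex>\<^sup>2\<^sup>n\<close>.\<close>
definition pauli1_vec :: "nat \<Rightarrow> complex vec \<Rightarrow> complex vec" where
  "pauli1_vec n v = vec (2*n) (\<lambda>i. if even i then v$(i+1) else v$(i-1))"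
definition pauli2_vec :: "nat \<Rightarrow> complex vec \<Rightarrow> complex vec" where
  "pauli2_vec n v = vec (2*n) (\<lambda>i. if even i then - \<i> * v$(i+1) else \<i> * v$(i-1))"
definition pauli3_vec :: "nat \<Rightarrow> complex vec \<Rightarrow> complex vec" where
  "pauli3_vec n v = vec (2*n) (\<lambda>i. if even i then v$i else - v$i)"

lemma pauli_vec_carrier [simp]:
  "pauli1_vec n v \<in> carrier_vec (2*n)" "pauli2_vec n v \<in> carrier_vec (2*n)" "pauli3_vec n v \<in> carrier_vec (2*n)"
  by (simp_all add: pauli1_vec_def pauli2_vec_def pauli3_vec_def)

lemma pauli_vec_index:
  assumes "p < n"
  shows "pauli1_vec n v $ (2*p) = v$(2*p+1)" "pauli1_vec n v $ (2*p+1) = v$(2*p)"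
    "pauli2_vec n v $ (2*p) = - \<i> * v$(2*p+1)" "pauli2_vec n v $ (2*p+1) = \<i> * v$(2*p)"
    "pauli3_vec n v $ (2*p) = v$(2*p)" "pauli3_vec n v $ (2*p+1) = - v$(2*p+1)"
  using assms by (simp_all add: pauli1_vec_def pauli2_vec_def pauli3_vec_def)

lemma quad_form_phi_ampliation:
  assumes X: "X \<in> carrier_mat (2*n) (2*n)" and v: "v \<in> carrier_vec (2*n)"
  shows "2 * quad_form (phi_ampliation a n X) v = of_real (2 - 3*a) * quad_form X v
    + of_real a * (quad_form X (pauli1_vec n v) + quad_form X (pauli2_vec n v) + quad_form X (pauli3_vec n v))"
proof -
  have "2 * block_form (phi_ampliation a n X) v p q = (2 - 3 * of_real a) * block_form X v p q
      + of_real a * (block_form X (pauli1_vec n v) p q + block_form X (pauli2_vec n v) p q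
                     + block_form X (pauli3_vec n v) p q)"
    if "p < n" "q < n" for p q
    unfolding block_form_def phi_ampliation_index[OF that] pauli_vec_index[OF that(1)] pauli_vec_index[OF that(2)]
    by (simp add: algebra_simps)
  then show ?thesis
    by (simp add: quad_form_blocks[OF X] quad_form_blocks[OF phi_ampliation_carrier(1) v] v
        sum_distrib_left sum.distrib distrib_left)
qed

lemma psd_phi_ampliation:
  assumes a: "0 \<le> a" "a \<le> 2/3" and X: "X \<in> carrier_mat (2*n) (2*n)" and "psd X"
  shows "psd (phi_ampliation a n X)"
proof -
  have herm: "mat_adjoint X = X" and pos: "\<And>u. u \<in> carrier_vec (2*n) \<Longrightarrow> 0 \<le> Re (quad_form X u)"
    using \<open>psd X\<close> X unfolding psd_def by auto
  have "0 \<le> Re (quad_form (phi_ampliation a n X) v)" if v: "v \<in> carrier_vec (2*n)" for v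
  proof -
    have "2 * Re (quad_form (phi_ampliation a n X) v) = (2 - 3*a) * Re (quad_form X v)
      + a * (Re (quad_form X (pauli1_vec n v)) + Re (quad_form X (pauli2_vec n v)) + Re (quad_form X (pauli3_vec n v)))"
      using arg_cong[OF quad_form_phi_ampliation[OF X v, of a], of Re] by simp
    moreover have "0 \<le> (2 - 3*a) * Re (quad_form X v)
      + a * (Re (quad_form X (pauli1_vec n v)) + Re (quad_form X (pauli2_vec n v)) + Re (quad_form X (pauli3_vec n v)))"
      using a pos[OF v] pos[OF pauli_vec_carrier(1)] pos[OF pauli_vec_carrier(2)] pos[OF pauli_vec_carrier(3)]
      by (intro add_nonneg_nonneg mult_nonneg_nonneg) auto
    ultimately show ?thesis
      by linarith
  qed
  then show ?thesis
    unfolding psd_def using hermitian_phi_ampliation[OF X herm] by (simp add: square_mat.simps)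
qed

text \<open>The unnormalised maximally entangled state \<open>v = |00\<rangle> + |11\<rangle>\<close>, as the matrix \<open>v v\<^sup>*\<close>.\<close>
definition max_entangled :: "complex mat" where
  "max_entangled = mat 4 4 (\<lambda>(i,j). if (i = 0 \<or> i = 3) \<and> (j = 0 \<or> j = 3) then 1 else 0)"

lemma max_entangled_carrier: "max_entangled \<in> carrier_mat (2*2) (2*2)"
  by (simp add: max_entangled_def)

lemma psd_max_entangled: "psd max_entangled"
proof -
  have "mat_adjoint max_entangled = max_entangled"
    by (rule eq_matI) (auto simp: max_entangled_def mat_adjoint_def mat_of_rows_def)
  moreover have "0 \<le> Re (quad_form max_entangled v)" if "v \<in> carrier_vec (2*2)" for v
  proof -
    have "quad_form max_entangled v = cnj (v$0 + v$3) * (v$0 + v$3)"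
      unfolding quad_form_blocks[OF max_entangled_carrier that]
      by (simp add: sum_lessThan_2 block_form_def max_entangled_def algebra_simps numeral_3_eq_3)
    then show ?thesis
      by (simp only: Re_cnj_mult_self_nonneg)
  qed
  ultimately show ?thesis
    unfolding psd_def by (simp add: max_entangled_def square_mat.simps)
qed

lemma psd_phi_ampliation_max_entangled_imp:
  assumes "psd (phi_ampliation a 2 max_entangled)"
  shows "0 \<le> a \<and> a \<le> 2/3"
proof -
  define e1 :: "complex vec" where "e1 = vec (2*2) (\<lambda>i. if i = 1 then 1 else 0)"
  define e2 :: "complex vec" where "e2 = vec (2*2) (\<lambda>i. if i = 0 \<or> i = 3 then 1 else 0)"
  have e: "e1 \<in> carrier_vec (2*2)" "e2 \<in> carrier_vec (2*2)"
    by (simp_all add: e1_def e2_def)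
  have "quad_form (phi_ampliation a 2 max_entangled) e1 = of_real a"
    "quad_form (phi_ampliation a 2 max_entangled) e2 = of_real (4 - 6*a)"
    unfolding quad_form_blocks[OF phi_ampliation_carrier(1) e(1)] quad_form_blocks[OF phi_ampliation_carrier(1) e(2)]
    by (simp_all add: sum_lessThan_2 block_form_def phi_ampliation_def phi_def max_entangled_def e1_def e2_def)
  moreover have "0 \<le> Re (quad_form (phi_ampliation a 2 max_entangled) e1)"
    "0 \<le> Re (quad_form (phi_ampliation a 2 max_entangled) e2)"
    using assms e unfolding psd_def by simp_all
  ultimately show ?thesis
    by simp
qed

lemma param_range_iff:
  fixes \<alpha> c t :: real
  assumes "\<alpha> \<noteq> 3" "c > 0" "2 = c * (3 - t)"
  shows "0 \<le> 2/(3-\<alpha>) \<and> 2/(3-\<alpha>) \<le> c \<longleftrightarrow> \<alpha> \<le> t"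
proof (cases "\<alpha> < 3")
  case True
  then have "2/(3-\<alpha>) \<le> c \<longleftrightarrow> c * (3 - t) \<le> c * (3 - \<alpha>)"
    using assms(3) by (simp add: divide_le_eq)
  with True show ?thesis
    using assms(2) by simp
next
  case False
  with assms(1) have "2/(3-\<alpha>) < 0"
    by (simp add: divide_neg_pos)
  moreover have "0 < c * (3 - t)"
    using assms(3) by linarith
  then have "t < 3"
    using assms(2) by (simp add: zero_less_mult_iff)
  ultimately show ?thesis
    using False by auto
qed

lemma positive_map_Phi_iff:
  assumes "\<alpha> \<noteq> 3"
  shows "positive_map (Phi \<alpha>) \<longleftrightarrow> \<alpha> \<le> 1"
proof -
  have "psd (mat2 1 0 0 0)"
    unfolding psd_mat2_iff form2_def using Re_cnj_mult_self_nonneg by simp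
  then have "positive_map (Phi \<alpha>) \<longleftrightarrow> 0 \<le> 2/(3-\<alpha>) \<and> 2/(3-\<alpha>) \<le> 1"
    unfolding positive_map_def
    by (metis mat2_carrier(1) mat2_eta Phi_mat2[OF assms] psd_phi psd_phi_E11_imp)
  also have "\<dots> \<longleftrightarrow> \<alpha> \<le> 1"
    using assms by (rule param_range_iff) auto
  finally show ?thesis .
qed

lemma Phi_schwarz_defect:
  assumes "\<alpha> \<noteq> 3"
  shows "Phi \<alpha> (mat_adjoint (mat2 x y z w) * mat2 x y z w) - Phi \<alpha> (mat_adjoint (mat2 x y z w)) * Phi \<alpha> (mat2 x y z w)
       = schwarz_defect (2/(3-\<alpha>)) x y z w"
  unfolding schwarz_defect_def Let_def mat_adjoint_mat2 mat2_mult Phi_mat2[OF assms] mat2_index ..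

lemma schwarz_map_Phi_iff:
  assumes "\<alpha> \<noteq> 3"
  shows "schwarz_map (Phi \<alpha>) \<longleftrightarrow> \<alpha> \<le> 1/3"
proof -
  have "schwarz_map (Phi \<alpha>) \<longleftrightarrow> 0 \<le> 2/(3-\<alpha>) \<and> 2/(3-\<alpha>) \<le> 3/4"
    unfolding schwarz_map_def
    by (metis mat2_carrier(1) mat2_eta Phi_schwarz_defect[OF assms] psd_schwarz_defect psd_schwarz_defect_E12_imp)
  also have "\<dots> \<longleftrightarrow> \<alpha> \<le> 1/3"
    using assms by (rule param_range_iff) auto
  finally show ?thesis .
qed

lemma completely_positive_Phi_iff:
  assumes "\<alpha> \<noteq> 3"
  shows "completely_positive (Phi \<alpha>) \<longleftrightarrow> \<alpha> \<le> 0"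
proof -
  have "completely_positive (Phi \<alpha>) \<longleftrightarrow> 0 \<le> 2/(3-\<alpha>) \<and> 2/(3-\<alpha>) \<le> 2/3"
    unfolding completely_positive_def ampliation_Phi[OF assms]
    by (metis psd_phi_ampliation max_entangled_carrier psd_max_entangled psd_phi_ampliation_max_entangled_imp)
  also have "\<dots> \<longleftrightarrow> \<alpha> \<le> 0"
    using assms by (rule param_range_iff) auto
  finally show ?thesis .
qed

theorem corollary4:
  fixes \<alpha> :: real
  assumes "\<alpha> \<noteq> 3"
  shows "(positive_map (Phi \<alpha>) \<longleftrightarrow> \<alpha> \<le> 1)
       \<and> (schwarz_map (Phi \<alpha>) \<longleftrightarrow> \<alpha> \<le> 1/3)
       \<and> (completely_positive (Phi \<alpha>) \<longleftrightarrow> \<alpha> \<le> 0)"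
  using positive_map_Phi_iff[OF assms] schwarz_map_Phi_iff[OF assms] completely_positive_Phi_iff[OF assms]
  by blast

end
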